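(* Let $(x_n)_{n\ge0}$ be an infinite path in $\Gamma$ with $\ell(x_n)=n$, let $z$ be nonreal, and let $v_z,u_z:\Gamma\to\mathbb C$ satisfy $v_z(x_0)=1$, $v_z(x_1)=(z-\beta_{x_0})/\lambda_{x_0}$, $u_z(x_0)=0$, $u_z(x_1)=1/\lambda_{x_0}$, and $(Jv_z)(x)=zv_z(x)$, $(Ju_z)(x)=zu_z(x)$ for all $x\in\Gamma\setminus\{x_0\}$. Then for every $n\ge1$ and every $x\in\Gamma_n$, $v_z(x_n)u_z(x)=u_z(x_n)v_z(x)$.
   Context: Let $\Gamma$ be an infinite connected tree whose vertices are arranged in levels $\ell(x)\in\{0,1,2,\dots\}$: every vertex $x$ is adjacent to exactly one vertex $x'$ with $\ell(x')=\ell(x)+1$; for $\ell(x)\ge 1$ the set $N_x=\{y:\ y'=x\}$ of neighbours of $x$ on level $\ell(x)-1$ is finite and nonempty; $N_x=\emptyset$ if $\ell(x)=0$; there are no other edges. Fix $\lambda_x>0$, $\beta_x\in\mathbb R$. The Jacobi matrix $J$ acts on functions $v:\Gamma\to\mathbb C$ by $(Jv)(x)=\lambda_x v(x')+\beta_x v(x)+\sum_{y\in N_x}\lambda_y v(y)$. Given the path $(x_n)$, $\Gamma_n$ denotes the connected component containing $x_n$ of the graph obtained from $\Gamma$ by deleting all edges $\{x_n,x_{n+1}\}$, $n\ge0$ (no vertices are deleted); $\Gamma_n$ is finite and $x_n$ is its only vertex on level $n$. *)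

theory Defs
  imports Complex_Main
begin

text \<open>The tree \<Gamma> has vertex set the type 'a.  lev x is the level, and par x = x' is
  the unique neighbour of x on level lev x + 1.\<close>

definition children :: "('a \<Rightarrow> 'a) \<Rightarrow> 'a \<Rightarrow> 'a set" where
  "children par x = {y. par y = x}"

definition adj :: "('a \<Rightarrow> 'a) \<Rightarrow> 'a \<Rightarrow> 'a \<Rightarrow> bool" where
  "adj par x y \<longleftrightarrow> y = par x \<or> x = par y"

definition level_tree :: "('a \<Rightarrow> nat) \<Rightarrow> ('a \<Rightarrow> 'a) \<Rightarrow> bool" where
  "level_tree lev par \<longleftrightarrow>
     infinite (UNIV :: 'a set) \<and>
     (\<forall>x. lev (par x) = lev x + 1) \<and>
     (\<forall>x. lev x \<ge> 1 \<longrightarrow> finite (children par x) \<and> children par x \<noteq> {}) \<and>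
     (\<forall>x. lev x = 0 \<longrightarrow> children par x = {}) \<and>
     (\<forall>x y. (adj par)\<^sup>*\<^sup>* x y)"

definition jacobi :: "('a \<Rightarrow> 'a) \<Rightarrow> ('a \<Rightarrow> real) \<Rightarrow> ('a \<Rightarrow> real) \<Rightarrow> ('a \<Rightarrow> complex) \<Rightarrow> 'a \<Rightarrow> complex" where
  "jacobi par lam beta v x =
     of_real (lam x) * v (par x) + of_real (beta x) * v x
     + (\<Sum>y\<in>children par x. of_real (lam y) * v y)"

definition cut_adj :: "('a \<Rightarrow> 'a) \<Rightarrow> (nat \<Rightarrow> 'a) \<Rightarrow> 'a \<Rightarrow> 'a \<Rightarrow> bool" where
  "cut_adj par xs x y \<longleftrightarrow> adj par x y \<and> \<not> (\<exists>k. {x, y} = {xs k, xs (Suc k)})"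

definition Gamma_n :: "('a \<Rightarrow> 'a) \<Rightarrow> (nat \<Rightarrow> 'a) \<Rightarrow> nat \<Rightarrow> 'a set" where
  "Gamma_n par xs n = {y. (cut_adj par xs)\<^sup>*\<^sup>* (xs n) y}"

end

theory Submission
  imports Defs
begin

text \<open>Fix n \<ge> 1 and put w = v(x_n) u - u(x_n) v, so that w(x_n) = 0 and Jw = zw away
  from x_0.  Let T be the set of proper descendants of x_n that do not descend from x_(n-1):
  it is finite, closed under taking children, left only through x_n, contains every vertex
  of \<Gamma>_n except x_n, and misses x_0.  Summing the conjugate of w times Jw over T, each
  edge inside T contributes a term and its conjugate and the edges leaving T contribute
  nothing, so the sum is real; but it also equals z times the squared norm of w on T.
  As z is nonreal, w = 0 on T.  The initial values of u and v and the positivity of \<lambda>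
  play no role.\<close>

lemma sum_children_reindex:
  fixes par :: "'a \<Rightarrow> 'a" and h :: "'a \<Rightarrow> 'a \<Rightarrow> 'b::comm_monoid_add"
  assumes "finite S" and closed: "\<And>x y. x \<in> S \<Longrightarrow> par y = x \<Longrightarrow> y \<in> S"
  shows "(\<Sum>x\<in>S. \<Sum>y\<in>children par x. h x y) = (\<Sum>y\<in>{y\<in>S. par y \<in> S}. h (par y) y)"
proof -
  have "(\<Sum>x\<in>S. \<Sum>y\<in>children par x. h x y)
      = (\<Sum>x\<in>S. \<Sum>y\<in>{y\<in>{y\<in>S. par y \<in> S}. par y = x}. h (par y) y)"
    by (rule sum.cong) (auto simp: children_def intro!: sum.cong dest: closed)
  also have "\<dots> = (\<Sum>y\<in>{y\<in>S. par y \<in> S}. h (par y) y)"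
    by (rule sum.group) (use \<open>finite S\<close> in auto)
  finally show ?thesis .
qed

lemma Im_jacobi_form_eq_0:
  fixes par :: "'a \<Rightarrow> 'a" and lam beta :: "'a \<Rightarrow> real" and w :: "'a \<Rightarrow> complex"
  assumes "finite S" and closed: "\<And>x y. x \<in> S \<Longrightarrow> par y = x \<Longrightarrow> y \<in> S"
    and boundary: "\<And>x. x \<in> S \<Longrightarrow> par x \<notin> S \<Longrightarrow> w (par x) = 0"
  shows "Im (\<Sum>x\<in>S. cnj (w x) * jacobi par lam beta w x) = 0"
proof -
  define P where "P = {y\<in>S. par y \<in> S}"
  define B where "B = (\<Sum>x\<in>P. cnj (w x) * (of_real (lam x) * w (par x)))"
  have up: "(\<Sum>x\<in>S. cnj (w x) * (of_real (lam x) * w (par x))) = B"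
    unfolding B_def P_def
    by (rule sum.mono_neutral_cong_right) (use \<open>finite S\<close> boundary in auto)
  have "(\<Sum>x\<in>S. cnj (w x) * (\<Sum>y\<in>children par x. of_real (lam y) * w y))
      = (\<Sum>y\<in>P. cnj (w (par y)) * (of_real (lam y) * w y))"
    unfolding sum_distrib_left P_def by (rule sum_children_reindex[OF \<open>finite S\<close> closed])
  also have "\<dots> = cnj B"
    unfolding B_def cnj_sum by (rule sum.cong) (simp_all add: mult_ac)
  finally have down: "(\<Sum>x\<in>S. cnj (w x) * (\<Sum>y\<in>children par x. of_real (lam y) * w y)) = cnj B" .
  have diag: "(\<Sum>x\<in>S. cnj (w x) * (of_real (beta x) * w x))
      = of_real (\<Sum>x\<in>S. beta x * (cmod (w x))^2)"
    unfolding of_real_sum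
    by (rule sum.cong) (simp_all add: complex_norm_square[symmetric] mult_ac)
  have "(\<Sum>x\<in>S. cnj (w x) * jacobi par lam beta w x)
      = (\<Sum>x\<in>S. cnj (w x) * (of_real (lam x) * w (par x)))
        + (\<Sum>x\<in>S. cnj (w x) * (of_real (beta x) * w x))
        + (\<Sum>x\<in>S. cnj (w x) * (\<Sum>y\<in>children par x. of_real (lam y) * w y))"
    unfolding jacobi_def by (simp add: distrib_left sum.distrib)
  also have "\<dots> = B + cnj B + of_real (\<Sum>x\<in>S. beta x * (cmod (w x))^2)"
    using up diag down by simp
  finally show ?thesis by simp
qed

lemma jacobi_eigenfunction_vanishes:
  fixes par :: "'a \<Rightarrow> 'a" and lam beta :: "'a \<Rightarrow> real" and w :: "'a \<Rightarrow> complex"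
  assumes "finite S" and closed: "\<And>x y. x \<in> S \<Longrightarrow> par y = x \<Longrightarrow> y \<in> S"
    and boundary: "\<And>x. x \<in> S \<Longrightarrow> par x \<notin> S \<Longrightarrow> w (par x) = 0"
    and eigen: "\<And>x. x \<in> S \<Longrightarrow> jacobi par lam beta w x = z * w x"
    and "Im z \<noteq> 0" and "x \<in> S"
  shows "w x = 0"
proof -
  have "(\<Sum>x\<in>S. cnj (w x) * jacobi par lam beta w x) = z * of_real (\<Sum>x\<in>S. (cmod (w x))^2)"
    unfolding sum_distrib_left of_real_sum
    by (rule sum.cong) (simp_all add: eigen complex_norm_square[symmetric] mult_ac)
  then have "Im z * (\<Sum>x\<in>S. (cmod (w x))^2) = 0"
    using Im_jacobi_form_eq_0[where S = S and w = w and par = par and lam = lam and beta = beta,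
        OF \<open>finite S\<close> closed boundary]
    by simp
  then have "(\<Sum>x\<in>S. (cmod (w x))^2) = 0"
    using \<open>Im z \<noteq> 0\<close> by simp
  then have "(cmod (w x))^2 = 0"
    using \<open>finite S\<close> \<open>x \<in> S\<close> by (simp add: sum_nonneg_eq_0_iff)
  then show ?thesis by simp
qed

lemma jacobi_diff:
  "jacobi par lam beta (\<lambda>y. a * u y - b * v y) x
    = a * jacobi par lam beta u x - b * jacobi par lam beta v x"
  unfolding jacobi_def by (simp add: algebra_simps sum_subtractf sum_distrib_left)

lemma finite_funpow_preimage:
  assumes "\<And>c. finite (children par c)"
  shows "finite {x. (par ^^ k) x = y}"
proof (induction k arbitrary: y)
  case 0
  then show ?case by simp
next
  case (Suc k)
  have "{x. (par ^^ Suc k) x = y} = (\<Union>c\<in>{c. (par ^^ k) c = y}. children par c)"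
    by (auto simp: children_def funpow_Suc_right simp del: funpow.simps)
  then show ?case using Suc assms by simp
qed

text \<open>The proper descendants of a, except those of its child b.  The levels fix the
  number of steps from a descendant up to a.\<close>

definition subtree_without :: "('a \<Rightarrow> nat) \<Rightarrow> ('a \<Rightarrow> 'a) \<Rightarrow> 'a \<Rightarrow> 'a \<Rightarrow> 'a set" where
  "subtree_without lev par a b =
     {y. lev y < lev a \<and> (par ^^ (lev a - lev y)) y = a \<and> (par ^^ (lev a - lev y - 1)) y \<noteq> b}"

lemma finite_subtree_without:
  assumes "\<And>c. finite (children par c)"
  shows "finite (subtree_without lev par a b)"
proof (rule finite_subset)
  show "subtree_without lev par a b \<subseteq> (\<Union>k\<le>lev a. {y. (par ^^ k) y = a})"
    unfolding subtree_without_def by (auto intro!: bexI[where x="lev a - lev _"])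
  show "finite (\<Union>k\<le>lev a. {y. (par ^^ k) y = a})"
    using finite_funpow_preimage[OF assms] by simp
qed

context
  fixes lev :: "'a \<Rightarrow> nat" and par :: "'a \<Rightarrow> 'a"
  assumes lev_par: "\<And>x. lev (par x) = lev x + 1"
begin

lemma subtree_without_children_closed:
  assumes "x \<in> subtree_without lev par a b" and "par y = x"
  shows "y \<in> subtree_without lev par a b"
proof -
  have "lev a - lev y = Suc (lev a - lev x)" "lev a - lev y - 1 = Suc (lev a - lev x - 1)"
    using assms lev_par unfolding subtree_without_def by auto
  then show ?thesis
    using assms lev_par unfolding subtree_without_def
    by (simp only: funpow_Suc_right o_apply mem_Collect_eq) auto
qed

lemma subtree_without_par:
  assumes "y \<in> subtree_without lev par a b"
  shows "par y \<in> subtree_without lev par a b \<or> par y = a"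
proof (cases "lev y + 1 < lev a")
  case True
  then have "lev a - lev y = Suc (lev a - lev (par y))"
    "lev a - lev y - 1 = Suc (lev a - lev (par y) - 1)"
    using lev_par by auto
  then show ?thesis
    using assms True lev_par unfolding subtree_without_def
    by (simp only: funpow_Suc_right o_apply mem_Collect_eq) auto
next
  case False
  then have "lev a - lev y = 1"
    using assms unfolding subtree_without_def by auto
  then show ?thesis
    using assms unfolding subtree_without_def by auto
qed

context
  fixes xs :: "nat \<Rightarrow> 'a"
  assumes path_lev: "\<And>n. lev (xs n) = n"
    and path_adj: "\<And>n. adj par (xs n) (xs (Suc n))"
begin

lemma par_path: "par (xs k) = xs (Suc k)"
proof -
  have "lev (par (xs (Suc k))) \<noteq> lev (xs k)"
    using lev_par path_lev by simp
  then have "xs k \<noteq> par (xs (Suc k))"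
    by metis
  then show ?thesis
    using path_adj[of k] unfolding adj_def by auto
qed

lemma funpow_par_path: "(par ^^ k) (xs m) = xs (m + k)"
  by (induction k) (simp_all add: par_path)

lemma path_start_notin_subtree_without:
  "xs 0 \<notin> subtree_without lev par (xs n) (xs (n - 1))"
  using funpow_par_path[of "n - 1" 0] path_lev unfolding subtree_without_def by auto

lemma Gamma_n_subset_subtree_without:
  assumes "n \<ge> 1"
  shows "Gamma_n par xs n \<subseteq> insert (xs n) (subtree_without lev par (xs n) (xs (n - 1)))"
proof
  let ?T = "subtree_without lev par (xs n) (xs (n - 1))"
  fix y assume "y \<in> Gamma_n par xs n"
  then have "(cut_adj par xs)\<^sup>*\<^sup>* (xs n) y"
    unfolding Gamma_n_def by simp
  then show "y \<in> insert (xs n) ?T"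
  proof (induction rule: rtranclp_induct)
    case base
    then show ?case by simp
  next
    case (step y y')
    from step.hyps(2) have edge: "y' = par y \<or> y = par y'"
      and not_path: "\<And>k. {y, y'} \<noteq> {xs k, xs (Suc k)}"
      unfolding cut_adj_def adj_def by auto
    show ?case
    proof (cases "y = xs n")
      case True
      have "y' \<noteq> par y"
        using not_path[of n] True par_path by auto
      then have par_y': "par y' = xs n"
        using edge True by auto
      then have lev_y': "lev y' + 1 = n"
        using lev_par path_lev by metis
      have "y' \<noteq> xs (n - 1)"
        using not_path[of "n - 1"] True \<open>n \<ge> 1\<close> by (auto simp: insert_commute)
      moreover have "lev (xs n) - lev y' = 1" "lev (xs n) - lev y' - 1 = 0"
        using lev_y' path_lev by auto
      ultimately show ?thesis
        using lev_y' par_y' path_lev unfolding subtree_without_def by auto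
    next
      case False
      then have "y \<in> ?T"
        using step.IH by simp
      then show ?thesis
        using edge subtree_without_par subtree_without_children_closed by blast
    qed
  qed
qed

lemma eigenfunction_vanishes_on_Gamma_n:
  fixes lam beta :: "'a \<Rightarrow> real" and w :: "'a \<Rightarrow> complex"
  assumes finite_children: "\<And>c. finite (children par c)"
    and "n \<ge> 1" and "Im z \<noteq> 0" and "w (xs n) = 0"
    and eigen: "\<And>y. y \<noteq> xs 0 \<Longrightarrow> jacobi par lam beta w y = z * w y"
    and "x \<in> Gamma_n par xs n"
  shows "w x = 0"
proof -
  let ?T = "subtree_without lev par (xs n) (xs (n - 1))"
  have "w y = 0" if "y \<in> ?T" for y
  proof (rule jacobi_eigenfunction_vanishes[where S = ?T])
    show "finite ?T"
      by (rule finite_subtree_without[OF finite_children])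
    show "\<And>x y. x \<in> ?T \<Longrightarrow> par y = x \<Longrightarrow> y \<in> ?T"
      by (rule subtree_without_children_closed)
    show "w (par y) = 0" if "y \<in> ?T" "par y \<notin> ?T" for y
      using subtree_without_par that \<open>w (xs n) = 0\<close> by metis
    show "jacobi par lam beta w y = z * w y" if "y \<in> ?T" for y
      using eigen that path_start_notin_subtree_without by metis
  qed (use \<open>Im z \<noteq> 0\<close> that in auto)
  then show ?thesis
    using Gamma_n_subset_subtree_without[OF \<open>n \<ge> 1\<close>] \<open>x \<in> Gamma_n par xs n\<close> \<open>w (xs n) = 0\<close>
    by blast
qed

end

end

lemma level_tree_lev_par: "level_tree lev par \<Longrightarrow> lev (par x) = lev x + 1"
  unfolding level_tree_def by auto

lemma level_tree_finite_children: "level_tree lev par \<Longrightarrow> finite (children par x)"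
  unfolding level_tree_def by (metis finite.emptyI less_one not_le)

theorem lemma7:
  fixes lev :: "'a \<Rightarrow> nat" and par :: "'a \<Rightarrow> 'a"
    and lam beta :: "'a \<Rightarrow> real" and xs :: "nat \<Rightarrow> 'a"
    and z :: complex and v u :: "'a \<Rightarrow> complex"
  assumes tree: "level_tree lev par"
    and lam_pos: "\<forall>x. lam x > 0"
    and path_lev: "\<forall>n. lev (xs n) = n"
    and path_adj: "\<forall>n. adj par (xs n) (xs (Suc n))"
    and nonreal: "Im z \<noteq> 0"
    and v0: "v (xs 0) = 1"
    and v1: "v (xs 1) = (z - of_real (beta (xs 0))) / of_real (lam (xs 0))"
    and u0: "u (xs 0) = 0"
    and u1: "u (xs 1) = 1 / of_real (lam (xs 0))"
    and Jv: "\<forall>x. x \<noteq> xs 0 \<longrightarrow> jacobi par lam beta v x = z * v x"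
    and Ju: "\<forall>x. x \<noteq> xs 0 \<longrightarrow> jacobi par lam beta u x = z * u x"
  shows "\<forall>n\<ge>1. \<forall>x\<in>Gamma_n par xs n. v (xs n) * u x = u (xs n) * v x"
proof (intro allI impI ballI)
  fix n x assume "n \<ge> 1" and "x \<in> Gamma_n par xs n"
  define w where "w = (\<lambda>y. v (xs n) * u y - u (xs n) * v y)"
  have "jacobi par lam beta w y = z * w y" if "y \<noteq> xs 0" for y
    using Jv Ju that unfolding w_def jacobi_diff by (simp add: algebra_simps)
  moreover have "w (xs n) = 0"
    unfolding w_def by simp
  ultimately have "w x = 0"
    using eigenfunction_vanishes_on_Gamma_n[of lev par xs, OF _ _ _ _ \<open>n \<ge> 1\<close> nonreal]
      level_tree_lev_par[OF tree] level_tree_finite_children[OF tree] path_lev path_adj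
      \<open>x \<in> Gamma_n par xs n\<close>
    by blast
  then show "v (xs n) * u x = u (xs n) * v x"
    unfolding w_def by simp
qed

end
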